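(* Let $(N,v)$ be a cooperative game given by nonnegative integers $k,w_1,\ldots,w_{|N|}$ with $v(S)=\max_{S'\subseteq S:\ |S'|\le k}\sum_{j\in S'}w_j$ (the sum of the $k$ largest weights in $S$). Then the Shapley value of any given agent can be computed in time $O(|N|^3)$.
   Context: The Shapley value of agent $i$ in a cooperative game $(N,v)$ is $\phi_i(v)=\sum_{S\subseteq N\setminus\{i\}}\frac{|S|!\,(|N|-|S|-1)!}{|N|!}\big(v(S\cup\{i\})-v(S)\big)$. Running times count arithmetic operations at unit cost. *)

theory Defs
  imports Complex_Main
begin

text \<open>Agents are 0,...,n-1 where n = length w; weight of agent j is w ! j.\<close>

definition kmax_game :: "nat \<Rightarrow> nat list \<Rightarrow> nat set \<Rightarrow> rat" where
  "kmax_game k w S = of_nat (Max {(\<Sum>j\<in>S'. w ! j) | S'. S' \<subseteq> S \<and> card S' \<le> k})"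

definition shapley :: "nat set \<Rightarrow> (nat set \<Rightarrow> rat) \<Rightarrow> nat \<Rightarrow> rat" where
  "shapley N v i = (\<Sum>S\<in>Pow (N - {i}).
      of_nat (fact (card S) * fact (card N - card S - 1)) / of_nat (fact (card N))
      * (v (S \<union> {i}) - v S))"

text \<open>Registers are indexed by naturals and hold rationals. Each executed
 instruction (arithmetic operation, comparison, jump, (indirect) memory access)
 costs one time unit.\<close>

datatype instr =
    Const nat rat
  | Add nat nat nat
  | Sub nat nat nat
  | Mul nat nat nat
  | Div nat nat nat          (* r[a] := r[b] / r[c]  (x / 0 = 0) *)
  | Load nat nat
  | Store nat nat
  | JmpLe nat nat nat
  | Jmp nat
  | Halt

type_synonym config = "nat \<times> (nat \<Rightarrow> rat)"

definition halted :: "instr list \<Rightarrow> config \<Rightarrow> bool" where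
  "halted p c = (fst c \<ge> length p \<or> p ! fst c = Halt)"

definition addr :: "rat \<Rightarrow> nat" where
  "addr x = nat \<lfloor>x\<rfloor>"

definition step :: "instr list \<Rightarrow> config \<Rightarrow> config" where
  "step p c = (if halted p c then c else
     (let pc = fst c; m = snd c in
      case p ! pc of
        Const a x \<Rightarrow> (pc + 1, m(a := x))
      | Add a b d \<Rightarrow> (pc + 1, m(a := m b + m d))
      | Sub a b d \<Rightarrow> (pc + 1, m(a := m b - m d))
      | Mul a b d \<Rightarrow> (pc + 1, m(a := m b * m d))
      | Div a b d \<Rightarrow> (pc + 1, m(a := m b / m d))
      | Load a b \<Rightarrow> (pc + 1, m(a := m (addr (m b))))
      | Store a b \<Rightarrow> (pc + 1, m(addr (m a) := m b))
      | JmpLe a b l \<Rightarrow> (if m a \<le> m b then l else pc + 1, m)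
      | Jmp l \<Rightarrow> (l, m)
      | Halt \<Rightarrow> c))"

definition run :: "instr list \<Rightarrow> nat \<Rightarrow> config \<Rightarrow> config" where
  "run p t c = (step p ^^ t) c"

definition input_mem :: "nat \<Rightarrow> nat list \<Rightarrow> nat \<Rightarrow> nat \<Rightarrow> rat" where
  "input_mem k w i r =
     (if r = 0 then of_nat (length w)
      else if r = 1 then of_nat k
      else if r = 2 then of_nat i
      else if r - 3 < length w then of_nat (w ! (r - 3))
      else 0)"

definition computes_within ::
  "instr list \<Rightarrow> nat \<Rightarrow> nat list \<Rightarrow> nat \<Rightarrow> rat \<Rightarrow> nat \<Rightarrow> bool" where
  "computes_within p k w i y T =
     (\<exists>t \<le> T. halted p (run p t (0, input_mem k w i))
              \<and> snd (run p t (0, input_mem k w i)) 0 = y)"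

end

theory Submission
  imports Defs
begin

text \<open>
  The sum of the k largest weights in S equals the sum over the layers t = 1, 2, ... of
  min k |{j \<in> S. t \<le> w_j}|, so by additivity the Shapley value of the k-max game is the sum of
  the Shapley values of the threshold games S \<mapsto> min k |S \<inter> A_t|. In such a game the agents
  outside A_t are null players and those in A_t are symmetric, so each agent of A_t gets
  min k |A_t| / |A_t|. The count |A_t| is constant for t between two consecutive weights, so the
  sum over layers collapses to one term per agent j with w_j \<le> w_i, and each term needs only a pass
  over the weights: O(|N|^2) arithmetic operations, carried out by an explicit RAM program.
\<close>

section \<open>The Shapley value of threshold games\<close>

definition shapley_weight :: "nat \<Rightarrow> nat \<Rightarrow> rat" where
  "shapley_weight n s = of_nat (fact s * fact (n - s - 1)) / of_nat (fact n)"

lemma shapley_altdef: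
  "shapley N v i = (\<Sum>S\<in>Pow (N - {i}). shapley_weight (card N) (card S) * (v (S \<union> {i}) - v S))"
  by (simp add: shapley_def shapley_weight_def)

lemma shapley_weight_Suc:
  assumes "s < n"
  shows "shapley_weight (Suc n) s + shapley_weight (Suc n) (Suc s) = shapley_weight n s"
proof -
  obtain r where r: "n = Suc (s + r)" using assms less_imp_Suc_add by blast
  have diffs: "Suc n - s - 1 = Suc r" "Suc n - Suc s - 1 = r" "n - s - 1 = r" using r by auto
  define a :: rat where "a = fact s * fact r / fact n"
  have "shapley_weight (Suc n) s = a * of_nat (Suc r) / of_nat (Suc n)"
    unfolding shapley_weight_def a_def diffs of_nat_mult of_nat_fact fact_Suc[of r] fact_Suc[of n]
    by (simp add: field_simps)
  moreover have "shapley_weight (Suc n) (Suc s) = a * of_nat (Suc s) / of_nat (Suc n)"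
    unfolding shapley_weight_def a_def diffs of_nat_mult of_nat_fact fact_Suc[of s] fact_Suc[of n]
    by (simp add: field_simps)
  moreover have "shapley_weight n s = a"
    unfolding shapley_weight_def a_def diffs by simp
  moreover have "a * of_nat (Suc r) / of_nat (Suc n) + a * of_nat (Suc s) / of_nat (Suc n) = a"
  proof -
    have sum: "of_nat (Suc r) + of_nat (Suc s) = (of_nat (Suc n) :: rat)"
      using r by (simp flip: of_nat_add)
    show ?thesis
      by (simp only: add_divide_distrib[symmetric] distrib_left[symmetric] sum) simp
  qed
  ultimately show ?thesis by simp
qed

lemma choose_mult_shapley_weight:
  assumes "s \<le> n"
  shows "of_nat (n choose s) * shapley_weight (Suc n) s = 1 / of_nat (Suc n)"
proof -
  have "of_nat (n choose s) * shapley_weight (Suc n) s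
      = of_nat (fact s * fact (n - s) * (n choose s)) / of_nat (fact (Suc n))"
    by (simp add: shapley_weight_def algebra_simps)
  also have "fact s * fact (n - s) * (n choose s) = (fact n :: nat)"
    using assms by (rule binomial_fact_lemma)
  also have "(fact (Suc n) :: nat) = Suc n * fact n"
    by simp
  finally show ?thesis
    by (metis nonzero_divide_mult_cancel_right fact_nonzero of_nat_fact of_nat_mult)
qed

lemma sum_Pow_card:
  assumes "finite M"
  shows "(\<Sum>S\<in>Pow M. g (card S)) = (\<Sum>s\<le>card M. of_nat (card M choose s) * (g s :: 'a :: semiring_1))"
proof -
  have "(\<Sum>S\<in>Pow M. g (card S)) = (\<Sum>s\<le>card M. \<Sum>S\<in>{S\<in>Pow M. card S = s}. g (card S))"
    using assms by (intro sum.group[symmetric]) (auto simp: card_mono)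
  also have "\<dots> = (\<Sum>s\<le>card M. of_nat (card M choose s) * g s)"
    using n_subsets[OF assms] by (intro sum.cong) auto
  finally show ?thesis .
qed

lemma shapley_sum_games:
  assumes "finite T" and "i \<in> N" and "\<And>S. S \<subseteq> N \<Longrightarrow> v S = (\<Sum>t\<in>T. u t S)"
  shows "shapley N v i = (\<Sum>t\<in>T. shapley N (u t) i)"
proof -
  have "shapley N v i = (\<Sum>S\<in>Pow (N - {i}). \<Sum>t\<in>T.
      shapley_weight (card N) (card S) * (u t (S \<union> {i}) - u t S))"
    unfolding shapley_altdef
  proof (intro sum.cong refl)
    fix S assume "S \<in> Pow (N - {i})"
    then have "v (S \<union> {i}) = (\<Sum>t\<in>T. u t (S \<union> {i}))" "v S = (\<Sum>t\<in>T. u t S)"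
      using assms(2) by (auto intro!: assms(3))
    then show "shapley_weight (card N) (card S) * (v (S \<union> {i}) - v S) = (\<Sum>t\<in>T.
        shapley_weight (card N) (card S) * (u t (S \<union> {i}) - u t S))"
      by (simp add: sum_distrib_left sum_subtractf right_diff_distrib)
  qed
  also have "\<dots> = (\<Sum>t\<in>T. shapley N (u t) i)"
    unfolding shapley_altdef by (rule sum.swap)
  finally show ?thesis .
qed

lemma shapley_cardinal_game:
  assumes "finite N" and "i \<in> N" and "\<And>S. S \<subseteq> N \<Longrightarrow> v S = f (card S)"
  shows "shapley N v i = (f (card N) - f 0) / of_nat (card N)"
proof -
  obtain n where n: "card N = Suc n" "card (N - {i}) = n"
    using assms(1,2) by (metis card_Diff_singleton card_gt_0_iff diff_Suc_1 empty_iff gr0_implies_Suc)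
  have "shapley N v i = (\<Sum>S\<in>Pow (N - {i}).
      shapley_weight (Suc n) (card S) * (f (Suc (card S)) - f (card S)))"
    unfolding shapley_altdef n(1)
  proof (intro sum.cong refl)
    fix S assume "S \<in> Pow (N - {i})"
    then have S: "S \<subseteq> N" "S \<union> {i} \<subseteq> N" "i \<notin> S" "finite S"
      using assms(1,2) finite_subset by auto
    then show "shapley_weight (Suc n) (card S) * (v (S \<union> {i}) - v S) =
        shapley_weight (Suc n) (card S) * (f (Suc (card S)) - f (card S))"
      using assms(3)[OF S(1)] assms(3)[OF S(2)] by simp
  qed
  also have "\<dots> = (\<Sum>s\<le>n. of_nat (n choose s) * shapley_weight (Suc n) s * (f (Suc s) - f s))"
    using sum_Pow_card[of "N - {i}"] assms(1) n by (simp add: mult.assoc)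
  also have "\<dots> = (\<Sum>s<Suc n. (f (Suc s) - f s) / of_nat (Suc n))"
    unfolding lessThan_Suc_atMost by (intro sum.cong refl) (simp add: choose_mult_shapley_weight)
  also have "\<dots> = (f (Suc n) - f 0) / of_nat (Suc n)"
    by (simp add: sum_divide_distrib[symmetric] sum_lessThan_telescope)
  finally show ?thesis
    unfolding n(1) .
qed

lemma shapley_null_player:
  assumes "finite N" and "i \<in> N" and "x \<notin> N"
    and "\<And>S. S \<subseteq> N \<Longrightarrow> v (insert x S) = v S"
  shows "shapley (insert x N) v i = shapley N v i"
proof -
  let ?n = "card N"
  let ?d = "\<lambda>S. v (S \<union> {i}) - v S"
  let ?P = "Pow (N - {i})"
  have coalition: "S \<subseteq> N" "S \<union> {i} \<subseteq> N" "finite S" "x \<notin> S" "card S < ?n"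
    if "S \<in> ?P" for S
  proof -
    show "S \<subseteq> N" "S \<union> {i} \<subseteq> N" "x \<notin> S" using that assms(2,3) by auto
    show "finite S" using assms(1) \<open>S \<subseteq> N\<close> by (rule rev_finite_subset)
    have "S \<subset> N" using that assms(2) by auto
    with assms(1) show "card S < ?n" by (rule psubset_card_mono)
  qed
  have "shapley (insert x N) v i = (\<Sum>S\<in>?P. shapley_weight (Suc ?n) (card S) * ?d S)
      + (\<Sum>S\<in>insert x ` ?P. shapley_weight (Suc ?n) (card S) * ?d S)"
  proof -
    have "Pow (insert x N - {i}) = ?P \<union> insert x ` ?P"
      using assms(2,3) by (auto simp: insert_Diff_if Pow_insert)
    moreover have "?P \<inter> insert x ` ?P = {}"
      using assms(3) by auto
    ultimately show ?thesis
      unfolding shapley_altdef using assms(1,3) by (simp add: sum.union_disjoint)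
  qed
  also have "(\<Sum>S\<in>insert x ` ?P. shapley_weight (Suc ?n) (card S) * ?d S)
      = (\<Sum>S\<in>?P. shapley_weight (Suc ?n) (Suc (card S)) * ?d S)"
  proof -
    have "inj_on (insert x) ?P"
      using coalition(4) by (intro inj_onI) (metis insert_ident)
    moreover have "?d (insert x S) = ?d S" if "S \<in> ?P" for S
      using assms(4)[OF coalition(1)[OF that]] assms(4)[OF coalition(2)[OF that]]
      by (simp add: insert_commute)
    ultimately show ?thesis
      using coalition(3,4) by (simp add: sum.reindex)
  qed
  also have "(\<Sum>S\<in>?P. shapley_weight (Suc ?n) (card S) * ?d S)
      + (\<Sum>S\<in>?P. shapley_weight (Suc ?n) (Suc (card S)) * ?d S) = shapley N v i"
    unfolding shapley_altdef sum.distrib[symmetric]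
    by (intro sum.cong refl) (simp add: coalition(5) shapley_weight_Suc flip: distrib_right)
  finally show ?thesis .
qed

lemma shapley_threshold_game:
  assumes "finite N" and "A \<subseteq> N"
  shows "shapley N (\<lambda>S. of_nat (min k (card (S \<inter> A)))) i =
    (if i \<in> A then of_nat (min k (card A)) / of_nat (card A) else 0)"
proof (cases "i \<in> A")
  case False
  then show ?thesis
    by (simp add: shapley_def)
next
  case True
  let ?v = "\<lambda>S. of_nat (min k (card (S \<inter> A))) :: rat"
  have "finite A"
    using assms by (rule rev_finite_subset)
  have grow: "shapley (A \<union> B) ?v i = of_nat (min k (card A)) / of_nat (card A)"
    if "finite B" "A \<inter> B = {}" for B
    using that
  proof (induction B rule: finite_induct)
    case empty
    have "shapley A ?v i = (of_nat (min k (card A)) - of_nat (min k 0)) / of_nat (card A)"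
      using \<open>finite A\<close> True by (rule shapley_cardinal_game) (simp add: Int_absorb2)
    then show ?case by simp
  next
    case (insert x B)
    then have "shapley (insert x (A \<union> B)) ?v i = shapley (A \<union> B) ?v i"
      using \<open>finite A\<close> True by (intro shapley_null_player) auto
    then show ?case
      using insert by simp
  qed
  have "shapley (A \<union> (N - A)) ?v i = of_nat (min k (card A)) / of_nat (card A)"
    using assms(1) by (intro grow) auto
  moreover have "A \<union> (N - A) = N"
    using assms(2) by blast
  ultimately show ?thesis
    using True by simp
qed

section \<open>The k-max game as a sum of threshold games\<close>

lemma sum_eq_sum_layers:
  fixes f :: "'a \<Rightarrow> nat"
  assumes "finite S" and "\<And>j. j \<in> S \<Longrightarrow> f j \<le> W"
  shows "(\<Sum>j\<in>S. f j) = (\<Sum>t\<in>{1..W}. card {j\<in>S. t \<le> f j})"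
proof -
  have "(\<Sum>j\<in>S. f j) = (\<Sum>j\<in>S. \<Sum>t\<in>{1..W}. if t \<le> f j then 1 else 0)"
  proof (intro sum.cong refl)
    fix j assume "j \<in> S"
    then have "{t\<in>{1..W}. t \<le> f j} = {1..f j}"
      using assms(2)[of j] by auto
    then show "f j = (\<Sum>t\<in>{1..W}. if t \<le> f j then 1 else 0)"
      by (simp add: sum.If_cases Int_def)
  qed
  also have "\<dots> = (\<Sum>t\<in>{1..W}. \<Sum>j\<in>S. if t \<le> f j then 1 else 0)"
    by (rule sum.swap)
  also have "\<dots> = (\<Sum>t\<in>{1..W}. card {j\<in>S. t \<le> f j})"
    using assms(1) by (simp add: sum.If_cases Int_def)
  finally show ?thesis .
qed

lemma exists_top_subset:
  fixes f :: "'a \<Rightarrow> 'b :: linorder"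
  assumes "finite S" and "m \<le> card S"
  shows "\<exists>T\<subseteq>S. card T = m \<and> (\<forall>x\<in>T. \<forall>y\<in>S - T. f y \<le> f x)"
  using assms(2)
proof (induction m)
  case 0
  show ?case by (intro exI[of _ "{}"]) simp
next
  case (Suc m)
  then obtain T where T: "T \<subseteq> S" "card T = m" "\<forall>x\<in>T. \<forall>y\<in>S - T. f y \<le> f x"
    by auto
  have "S - T \<noteq> {}"
  proof
    assume "S - T = {}"
    then have "S = T" using T(1) by blast
    then show False using Suc.prems T(2) by simp
  qed
  moreover have "finite (S - T)" using assms(1) by simp
  ultimately have "Max (f ` (S - T)) \<in> f ` (S - T)"
    by (intro Max_in) auto
  then obtain z where z: "z \<in> S - T" "f z = Max (f ` (S - T))"
    by (auto simp: image_iff)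
  then have "\<forall>y\<in>S - T. f y \<le> f z"
    using \<open>finite (S - T)\<close> by simp
  have "finite T"
    using assms(1) T(1) by (rule rev_finite_subset)
  then show ?case
    using T z \<open>\<forall>y\<in>S - T. f y \<le> f z\<close> by (intro exI[of _ "insert z T"]) auto
qed

lemma card_layer_top_subset:
  fixes f :: "'a \<Rightarrow> 'b :: linorder"
  assumes "finite S" and "T \<subseteq> S" and "card T = min k (card S)"
    and "\<forall>x\<in>T. \<forall>y\<in>S - T. f y \<le> f x"
  shows "card {j\<in>T. t \<le> f j} = min k (card {j\<in>S. t \<le> f j})"
proof -
  have "finite T" using assms(1,2) by (rule rev_finite_subset)
  show ?thesis
  proof (cases "{j\<in>S. t \<le> f j} \<subseteq> T")
    case True
    then have "{j\<in>T. t \<le> f j} = {j\<in>S. t \<le> f j}"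
      using assms(2) by auto
    moreover have "card {j\<in>S. t \<le> f j} \<le> card T"
      using \<open>finite T\<close> True by (rule card_mono)
    ultimately show ?thesis
      using assms(3) by simp
  next
    case False
    then obtain y where y: "y \<in> S" "t \<le> f y" "y \<notin> T" by blast
    have "t \<le> f x" if "x \<in> T" for x
    proof -
      have "f y \<le> f x" using assms(4) that y(1,3) by blast
      with y(2) show ?thesis by (rule order_trans)
    qed
    then have layer_T: "{j\<in>T. t \<le> f j} = T" by auto
    have "T \<subset> S" using assms(2) y by auto
    with assms(1) have "card T < card S" by (rule psubset_card_mono)
    then have "card T = k" using assms(3) by simp
    have "insert y T \<subseteq> {j\<in>S. t \<le> f j}"
      using assms(2) y layer_T by auto
    then have "card (insert y T) \<le> card {j\<in>S. t \<le> f j}"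
      using assms(1) by (intro card_mono) auto
    then have "k < card {j\<in>S. t \<le> f j}"
      using \<open>finite T\<close> \<open>card T = k\<close> y(3) by simp
    then show ?thesis
      using layer_T \<open>card T = k\<close> by simp
  qed
qed

lemma Max_subset_sum_eq_layers:
  fixes f :: "'a \<Rightarrow> nat"
  assumes "finite S" and "\<And>j. j \<in> S \<Longrightarrow> f j \<le> W"
  shows "Max {(\<Sum>j\<in>S'. f j) | S'. S' \<subseteq> S \<and> card S' \<le> k}
    = (\<Sum>t\<in>{1..W}. min k (card {j\<in>S. t \<le> f j}))"
    (is "Max ?X = ?layers")
proof (rule Max_eqI)
  have "?X \<subseteq> (\<lambda>S'. \<Sum>j\<in>S'. f j) ` Pow S" by auto
  then show "finite ?X"
    using assms(1) by (meson finite_Pow_iff finite_imageI finite_subset)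
next
  fix x assume "x \<in> ?X"
  then obtain S' where S': "S' \<subseteq> S" "card S' \<le> k" and x: "x = (\<Sum>j\<in>S'. f j)" by blast
  have "finite S'" using assms(1) S'(1) by (rule rev_finite_subset)
  have "x = (\<Sum>t\<in>{1..W}. card {j\<in>S'. t \<le> f j})"
    unfolding x using \<open>finite S'\<close> by (rule sum_eq_sum_layers) (use S'(1) assms(2) in auto)
  also have "\<dots> \<le> ?layers"
  proof (intro sum_mono)
    fix t
    have "card {j\<in>S'. t \<le> f j} \<le> card S'"
      using \<open>finite S'\<close> by (intro card_mono) auto
    moreover have "card {j\<in>S'. t \<le> f j} \<le> card {j\<in>S. t \<le> f j}"
      using assms(1) S'(1) by (intro card_mono) auto
    ultimately show "card {j\<in>S'. t \<le> f j} \<le> min k (card {j\<in>S. t \<le> f j})"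
      using S'(2) by simp
  qed
  finally show "x \<le> ?layers" .
next
  obtain T where T: "T \<subseteq> S" "card T = min k (card S)" "\<forall>x\<in>T. \<forall>y\<in>S - T. f y \<le> f x"
    using exists_top_subset[OF assms(1), of "min k (card S)" f] by auto
  have "finite T" using assms(1) T(1) by (rule rev_finite_subset)
  have "(\<Sum>j\<in>T. f j) = (\<Sum>t\<in>{1..W}. card {j\<in>T. t \<le> f j})"
    using \<open>finite T\<close> by (rule sum_eq_sum_layers) (use T(1) assms(2) in auto)
  also have "\<dots> = ?layers"
    using card_layer_top_subset[OF assms(1) T] by simp
  finally have "(\<Sum>j\<in>T. f j) = ?layers" .
  then show "?layers \<in> ?X"
    using T(1,2) by (auto intro!: exI[of _ T])
qed

lemma kmax_game_eq_sum_layers: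
  assumes "finite S" and "\<And>j. j \<in> S \<Longrightarrow> w ! j \<le> W"
  shows "kmax_game k w S = (\<Sum>t\<in>{1..W}. of_nat (min k (card {j\<in>S. t \<le> w ! j})))"
  by (simp add: kmax_game_def Max_subset_sum_eq_layers[OF assms])

section \<open>The Shapley value of the k-max game\<close>

definition count_ge :: "nat list \<Rightarrow> nat \<Rightarrow> nat" where
  "count_ge xs v = length (filter (\<lambda>u. v \<le> u) xs)"

definition count_eq :: "nat list \<Rightarrow> nat \<Rightarrow> nat" where
  "count_eq xs v = length (filter (\<lambda>u. u = v) xs)"

definition max_below :: "nat list \<Rightarrow> nat \<Rightarrow> nat" where
  "max_below xs v = Max (insert 0 {u \<in> set xs. u < v})"

lemma shapley_kmax_game_eq_sum_layers:
  assumes "i < length w"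
  shows "shapley {0..<length w} (kmax_game k w) i
    = (\<Sum>t\<in>{1..w ! i}. of_nat (min k (count_ge w t)) / of_nat (count_ge w t))"
proof -
  let ?N = "{0..<length w}"
  define W where "W = sum_list w"
  define A where "A t = {j\<in>?N. t \<le> w ! j}" for t
  have W: "w ! j \<le> W" if "j \<in> ?N" for j
    using that by (simp add: W_def elem_le_sum_list)
  have "kmax_game k w S = (\<Sum>t\<in>{1..W}. of_nat (min k (card (S \<inter> A t))))" if "S \<subseteq> ?N" for S
  proof -
    have "\<And>t. {j\<in>S. t \<le> w ! j} = S \<inter> A t" using that by (auto simp: A_def)
    moreover have "finite S" using that finite_subset by blast
    ultimately show ?thesis
      using that W by (subst kmax_game_eq_sum_layers) auto
  qed
  then have "shapley ?N (kmax_game k w) i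
      = (\<Sum>t\<in>{1..W}. shapley ?N (\<lambda>S. of_nat (min k (card (S \<inter> A t)))) i)"
    using assms by (intro shapley_sum_games) auto
  also have "\<dots> = (\<Sum>t\<in>{1..W}.
      if t \<le> w ! i then of_nat (min k (count_ge w t)) / of_nat (count_ge w t) else 0)"
  proof (intro sum.cong refl)
    fix t
    have "card (A t) = count_ge w t"
      by (simp add: A_def count_ge_def length_filter_conv_card atLeast0LessThan)
    then show "shapley ?N (\<lambda>S. of_nat (min k (card (S \<inter> A t)))) i
        = (if t \<le> w ! i then of_nat (min k (count_ge w t)) / of_nat (count_ge w t) else 0)"
      using assms by (subst shapley_threshold_game) (auto simp: A_def)
  qed
  also have "\<dots> = (\<Sum>t\<in>{1..w ! i}. of_nat (min k (count_ge w t)) / of_nat (count_ge w t))"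
  proof -
    have "{1..W} \<inter> {t. t \<le> w ! i} = {1..w ! i}" using W[of i] assms by auto
    then show ?thesis by (simp add: sum.If_cases)
  qed
  finally show ?thesis .
qed

lemma max_below_le: "max_below xs v \<le> v"
  unfolding max_below_def by (intro Max.boundedI) auto

lemma max_below_lt: "0 < v \<Longrightarrow> max_below xs v < v"
  unfolding max_below_def by (subst Max_less_iff) auto

lemma le_max_below: "u \<in> set xs \<Longrightarrow> u < v \<Longrightarrow> u \<le> max_below xs v"
  unfolding max_below_def by (intro Max_ge) auto

lemma max_below_cases: "max_below xs v = 0 \<or> max_below xs v \<in> set xs"
proof -
  have "max_below xs v \<in> insert 0 {u \<in> set xs. u < v}"
    unfolding max_below_def by (intro Max_in) auto
  then show ?thesis by auto
qed

lemma sum_atLeastAtMost_split_max_below: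
  assumes "x = 0 \<or> x \<in> set xs"
  shows "(\<Sum>t\<in>{1..x}. g t) = (\<Sum>v\<in>{v\<in>set xs. v \<le> x}. \<Sum>t\<in>{max_below xs v<..v}. g t)"
  using assms
proof (induction x rule: less_induct)
  case (less x)
  show ?case
  proof (cases "x = 0")
    case True
    then have "(\<Sum>v\<in>{v\<in>set xs. v \<le> x}. \<Sum>t\<in>{max_below xs v<..v}. g t) = 0"
      by (intro sum.neutral) auto
    then show ?thesis
      using True by simp
  next
    case False
    let ?p = "max_below xs x"
    have p: "?p < x" using False by (simp add: max_below_lt)
    have "{1..x} = {1..?p} \<union> {?p<..x}" "{1..?p} \<inter> {?p<..x} = {}"
      using p by auto
    then have "(\<Sum>t\<in>{1..x}. g t) = (\<Sum>t\<in>{1..?p}. g t) + (\<Sum>t\<in>{?p<..x}. g t)"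
      by (simp add: sum.union_disjoint)
    also have "(\<Sum>t\<in>{1..?p}. g t) = (\<Sum>v\<in>{v\<in>set xs. v \<le> ?p}. \<Sum>t\<in>{max_below xs v<..v}. g t)"
      using p max_below_cases by (intro less.IH) auto
    also have "\<dots> + (\<Sum>t\<in>{?p<..x}. g t)
        = (\<Sum>v\<in>insert x {v\<in>set xs. v \<le> ?p}. \<Sum>t\<in>{max_below xs v<..v}. g t)"
      using p by (simp add: add.commute)
    also have "insert x {v\<in>set xs. v \<le> ?p} = {v\<in>set xs. v \<le> x}"
      using less.prems False p le_max_below[of _ xs x] by (auto simp: order.order_iff_strict)
    finally show ?thesis .
  qed
qed

lemma count_ge_eq_on_max_below_interval:
  assumes "v \<in> set xs" and "max_below xs v < t" and "t \<le> v"
  shows "count_ge xs t = count_ge xs v"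
proof -
  have "(t \<le> u) = (v \<le> u)" if "u \<in> set xs" for u
    using that assms le_max_below[OF that, of v] by (cases "u < v") auto
  then show ?thesis
    unfolding count_ge_def by (metis filter_cong)
qed

lemma sum_set_eq_sum_nth_div_count_eq:
  fixes h :: "nat \<Rightarrow> 'a :: field_char_0"
  shows "(\<Sum>v\<in>{v\<in>set xs. P v}. h v)
    = (\<Sum>j<length xs. if P (xs ! j) then h (xs ! j) / of_nat (count_eq xs (xs ! j)) else 0)"
proof -
  let ?f = "\<lambda>j. if P (xs ! j) then h (xs ! j) / of_nat (count_eq xs (xs ! j)) else 0"
  have count: "count_eq xs v = card {j\<in>{..<length xs}. xs ! j = v}" for v
    by (simp add: count_eq_def length_filter_conv_card)
  have "(\<Sum>j<length xs. ?f j)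
      = (\<Sum>v\<in>(!) xs ` {..<length xs}. \<Sum>j\<in>{j\<in>{..<length xs}. xs ! j = v}. ?f j)"
    by (rule sum.image_gen) simp
  also have "\<dots> = (\<Sum>v\<in>set xs. if P v then h v else 0)"
  proof (intro sum.cong)
    show "(!) xs ` {..<length xs} = set xs"
      by (auto simp: in_set_conv_nth)
  next
    fix v assume "v \<in> set xs"
    then have "count_eq xs v \<noteq> 0"
      by (simp add: count_eq_def filter_empty_conv)
    then show "(\<Sum>j\<in>{j\<in>{..<length xs}. xs ! j = v}. ?f j) = (if P v then h v else 0)"
      unfolding count by simp
  qed
  also have "\<dots> = (\<Sum>v\<in>{v\<in>set xs. P v}. h v)"
    by (simp add: sum.inter_filter)
  finally show ?thesis ..
qed

text \<open>
  The layers t with max_below w v < t \<le> v all have count_ge w t = count_ge w v, and the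
  count_eq w v agents of weight v share them. The bracketing is the program's order of evaluation.
\<close>

definition shapley_term :: "nat \<Rightarrow> nat list \<Rightarrow> nat \<Rightarrow> nat \<Rightarrow> rat" where
  "shapley_term k w x v = (if v \<le> x then
     (of_nat v - of_nat (max_below w v)) * of_nat (min k (count_ge w v)) / of_nat (count_ge w v)
       / of_nat (count_eq w v)
   else 0)"

lemma shapley_kmax_game_eq_sum_terms:
  assumes "i < length w"
  shows "shapley {0..<length w} (kmax_game k w) i = (\<Sum>j<length w. shapley_term k w (w ! i) (w ! j))"
proof -
  let ?F = "\<lambda>c. of_nat (min k c) / of_nat c :: rat"
  have "shapley {0..<length w} (kmax_game k w) i = (\<Sum>t\<in>{1..w ! i}. ?F (count_ge w t))"
    using assms by (rule shapley_kmax_game_eq_sum_layers)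
  also have "\<dots> = (\<Sum>v\<in>{v\<in>set w. v \<le> w ! i}. \<Sum>t\<in>{max_below w v<..v}. ?F (count_ge w t))"
    using assms by (intro sum_atLeastAtMost_split_max_below) simp
  also have "\<dots> = (\<Sum>v\<in>{v\<in>set w. v \<le> w ! i}. (of_nat v - of_nat (max_below w v)) * ?F (count_ge w v))"
  proof (intro sum.cong refl)
    fix v assume "v \<in> {v\<in>set w. v \<le> w ! i}"
    have "(\<Sum>t\<in>{max_below w v<..v}. ?F (count_ge w t)) = (\<Sum>t\<in>{max_below w v<..v}. ?F (count_ge w v))"
    proof (rule sum.cong[OF refl])
      fix t assume "t \<in> {max_below w v<..v}"
      with \<open>v \<in> {v\<in>set w. v \<le> w ! i}\<close> have "count_ge w t = count_ge w v"
        by (intro count_ge_eq_on_max_below_interval) auto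
      then show "?F (count_ge w t) = ?F (count_ge w v)" by simp
    qed
    also have "\<dots> = of_nat (v - max_below w v) * ?F (count_ge w v)"
      by simp
    also have "of_nat (v - max_below w v) = (of_nat v - of_nat (max_below w v) :: rat)"
      by (rule of_nat_diff[OF max_below_le])
    finally show "(\<Sum>t\<in>{max_below w v<..v}. ?F (count_ge w t))
        = (of_nat v - of_nat (max_below w v)) * ?F (count_ge w v)" .
  qed
  also have "\<dots> = (\<Sum>j<length w. shapley_term k w (w ! i) (w ! j))"
    unfolding sum_set_eq_sum_nth_div_count_eq shapley_term_def by (simp only: times_divide_eq_right)
  finally show ?thesis .
qed

section \<open>A RAM program computing the Shapley value\<close>

fun exec :: "instr \<Rightarrow> nat \<Rightarrow> (nat \<Rightarrow> rat) \<Rightarrow> config" where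
  "exec (Const a x) pc m = (Suc pc, m(a := x))"
| "exec (Add a b d) pc m = (Suc pc, m(a := m b + m d))"
| "exec (Sub a b d) pc m = (Suc pc, m(a := m b - m d))"
| "exec (Mul a b d) pc m = (Suc pc, m(a := m b * m d))"
| "exec (Div a b d) pc m = (Suc pc, m(a := m b / m d))"
| "exec (Load a b) pc m = (Suc pc, m(a := m (addr (m b))))"
| "exec (Store a b) pc m = (Suc pc, m(addr (m a) := m b))"
| "exec (JmpLe a b l) pc m = (if m a \<le> m b then l else Suc pc, m)"
| "exec (Jmp l) pc m = (l, m)"
| "exec Halt pc m = (pc, m)"

lemma step_eq_exec: "step p (pc, m) = (if pc < length p then exec (p ! pc) pc m else (pc, m))"
  by (cases "p ! pc") (auto simp: step_def halted_def)

lemma run_0 [simp]: "run p 0 c = c"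
  by (simp add: run_def)

lemma run_Suc: "run p (Suc t) c = run p t (step p c)"
  by (simp add: run_def funpow_Suc_right del: funpow.simps)

lemma run_numeral: "run p (numeral k) c = run p (pred_numeral k) (step p c)"
  by (simp add: numeral_eq_Suc run_Suc)

lemma run_add: "run p (s + t) c = run p t (run p s c)"
  unfolding run_def by (metis add.commute comp_apply funpow_add)

definition reaches :: "instr list \<Rightarrow> config \<Rightarrow> nat \<Rightarrow> config \<Rightarrow> bool" where
  "reaches p c T c' \<longleftrightarrow> (\<exists>t\<le>T. run p t c = c')"

lemma reachesI: "run p t c = c' \<Longrightarrow> t \<le> T \<Longrightarrow> reaches p c T c'"
  unfolding reaches_def by blast

lemma reaches_trans: "reaches p c S c' \<Longrightarrow> reaches p c' T c'' \<Longrightarrow> reaches p c (S + T) c''"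
  unfolding reaches_def by (metis add_mono run_add)

lemma reaches_mono: "reaches p c S c' \<Longrightarrow> S \<le> T \<Longrightarrow> reaches p c T c'"
  unfolding reaches_def using order_trans by blast

lemma reaches_loop:
  assumes body: "\<And>l m. l < N \<Longrightarrow> P l m \<Longrightarrow>
      \<exists>m'. reaches p (a, m) T (if Suc l < N then a else b, m') \<and> P (Suc l) m'"
    and "0 < N" and "P 0 m"
  shows "\<exists>m'. reaches p (a, m) (N * T) (b, m') \<and> P N m'"
proof -
  have "\<exists>m'. reaches p (a, m) ((N - l) * T) (b, m') \<and> P N m'" if "l < N" "P l m" for l m
    using that
  proof (induction "N - l" arbitrary: l m)
    case 0
    then show ?case by simp
  next
    case (Suc d)
    obtain m1 where m1: "reaches p (a, m) T (if Suc l < N then a else b, m1)" "P (Suc l) m1"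
      using body Suc.prems by blast
    show ?case
    proof (cases "Suc l < N")
      case True
      then obtain m' where "reaches p (a, m1) ((N - Suc l) * T) (b, m')" "P N m'"
        using Suc m1(2) by (metis Suc_diff_Suc nat.inject)
      moreover have "N - l = Suc (N - Suc l)"
        using True by simp
      ultimately show ?thesis
        using reaches_trans[OF m1(1)[simplified True if_True]] by auto
    next
      case False
      then have "N = Suc l" using Suc.prems(1) by simp
      then show ?thesis using m1 by auto
    qed
  qed
  then show ?thesis
    using assms(2,3) by (metis diff_zero)
qed

lemma addr_of_nat [simp]: "addr (of_nat x) = x"
  by (simp add: addr_def)

text \<open>
  Only r0, r1, r2 are free at the start, so instructions 0--12 save k and i at addresses 4n and
  4n+1 and set r0 to 4n+1 + n/(n+1): its integer part is the counter of the loop 13--20, which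
  copies r[s] to r[s+30] for s = 4n+1 down to 3, and 21--25 recover n from the fractional part.
  Then 26--40 set r3 = n, r4 = k, r5 = w_i and the constants r14 = 1, r17 = 0. The loop 41--74
  adds shapley_term k w w_i w_j to r13 for j = r6; when w_j \<le> w_i the inner loop 50--63 over
  l = r7 first computes count_ge, count_eq and max_below of w_j in r10, r11, r12.
\<close>

definition prog :: "instr list" where
  "prog =
   [Add 0 0 0, Add 0 0 0, Store 0 1, Const 1 1, Add 0 0 1, Store 0 2, Sub 2 0 1, Const 1 4,
    Div 2 2 1, Const 1 1, Add 1 2 1, Div 2 2 1, Add 0 0 2,
    Const 1 30, Add 1 0 1, Load 2 0, Store 1 2, Const 1 1, Sub 0 0 1, Const 1 3,
    JmpLe 1 0 13,
    Const 1 2, Sub 0 0 1, Const 1 1, Sub 1 1 0, Div 0 0 1,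
    Const 14 1, Const 17 0, Add 3 0 17, Const 15 4, Mul 15 15 3, Const 16 30, Add 15 15 16,
    Load 4 15, Add 15 15 14, Load 16 15, Const 15 33, Add 15 15 16, Load 5 15, Const 13 0,
    Const 6 0,
    Const 15 33, Add 15 15 6, Load 8 15, JmpLe 8 5 46, Jmp 72,
    Const 10 0, Const 11 0, Const 12 0, Const 7 0,
    Const 15 33, Add 15 15 7, Load 9 15, JmpLe 8 9 57, JmpLe 9 12 61, Add 12 9 17, Jmp 61,
    Add 10 10 14, JmpLe 9 8 60, Jmp 61, Add 11 11 14, Add 7 7 14, JmpLe 3 7 64, Jmp 50,
    Sub 15 8 12, Add 16 4 17, JmpLe 4 10 68, Add 16 10 17, Mul 15 15 16, Div 15 15 10,
    Div 15 15 11, Add 13 13 15,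
    Add 6 6 14, JmpLe 3 6 75, Jmp 41,
    Add 0 13 17, Halt]"

lemma length_prog [simp]: "length prog = 77"
  by (simp add: prog_def)

lemmas prog_nth = arg_cong[where f = "\<lambda>p. p ! n" for n, OF prog_def]

lemmas prog_exec = run_Suc run_numeral step_eq_exec prog_nth

lemma prog_halts: "halted prog (76, m)"
  by (simp add: halted_def prog_def)

definition stashed_input :: "nat \<Rightarrow> nat list \<Rightarrow> nat \<Rightarrow> nat \<Rightarrow> rat" where
  "stashed_input k w i = (input_mem k w i)(4 * length w := of_nat k, 4 * length w + 1 := of_nat i)"

lemma prog_stash_inputs:
  assumes "0 < length w"
  shows "\<exists>m. run prog 13 (0, input_mem k w i) = (13, m) \<and>
    m 0 = of_nat (4 * length w + 1) + of_nat (length w) / (of_nat (length w) + 1) \<and>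
    (\<forall>a\<ge>3. m a = stashed_input k w i a)"
proof -
  have inputs: "input_mem k w i 0 = of_nat (length w)" "input_mem k w i (Suc 0) = of_nat k"
    "input_mem k w i 2 = of_nat i"
    by (simp_all add: input_mem_def)
  have addrs: "addr (4 * of_nat (length w)) = 4 * length w"
    "addr (1 + 4 * of_nat (length w)) = 4 * length w + 1"
    "addr (4 * of_nat (length w) + 1) = 4 * length w + 1"
    using addr_of_nat[of "4 * length w"] addr_of_nat[of "4 * length w + 1"] by (simp_all add: add.commute)
  show ?thesis
    using assms by (simp add: prog_exec inputs addrs stashed_input_def)
qed

lemma prog_copy_step:
  assumes f: "0 \<le> f" "f < 1" and s: "3 \<le> s" and m0: "m 0 = of_nat s + f"
  shows "\<exists>m'. run prog 8 (13, m) = (if 3 \<le> s - 1 then 13 else 21, m') \<and>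
     m' 0 = of_nat (s - 1) + f \<and> (\<forall>a\<ge>3. m' a = (if a = s + 30 then m s else m a))"
proof -
  have "\<lfloor>f\<rfloor> = 0" using f by (simp add: floor_eq_iff)
  then have addrs: "addr (of_nat s + f) = s" "addr (of_nat s + f + 30) = s + 30"
    by (simp_all add: addr_def)
  have decr: "of_nat s + f - 1 = of_nat (s - 1) + f"
    using s by (simp add: of_nat_diff)
  have test: "(4 \<le> of_nat s + f) = (3 \<le> s - 1)"
    using f s by linarith
  show ?thesis
    using s by (simp add: prog_exec m0 addrs decr test)
qed

lemma prog_copy_inputs:
  assumes f: "0 \<le> f" "f < 1" and H: "3 \<le> H"
    and m: "m 0 = of_nat H + f" "\<forall>a\<ge>3. m a = m0 a"
  shows "\<exists>m'. reaches prog (13, m) ((H - 2) * 8) (21, m') \<and> m' 0 = 2 + f \<and>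
    (\<forall>a\<ge>3. m' a = (if 33 \<le> a \<and> a \<le> H + 30 then m0 (a - 30) else m0 a))"
proof -
  let ?P = "\<lambda>l m. m 0 = of_nat (H - l) + f \<and>
    (\<forall>a\<ge>3. m a = (if H - l + 30 < a \<and> a \<le> H + 30 then m0 (a - 30) else m0 a))"
  have "\<exists>m'. reaches prog (13, m) ((H - 2) * 8) (21, m') \<and> ?P (H - 2) m'"
  proof (rule reaches_loop)
    fix l m assume l: "l < H - 2" and P: "?P l m"
    have "3 \<le> H - l" "m 0 = of_nat (H - l) + f"
      using l P by auto
    then obtain m' where run: "run prog 8 (13, m) = (if 3 \<le> H - l - 1 then 13 else 21, m')"
      and m': "m' 0 = of_nat (H - l - 1) + f"
        "\<forall>a\<ge>3. m' a = (if a = H - l + 30 then m (H - l) else m a)"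
      using prog_copy_step[OF f] by blast
    have "?P (Suc l) m'"
      using P m' l by auto
    moreover have "reaches prog (13, m) 8 (if Suc l < H - 2 then 13 else 21, m')"
    proof -
      have "(3 \<le> H - l - 1) = (Suc l < H - 2)" by auto
      then show ?thesis using reachesI[OF run order_refl] by presburger
    qed
    ultimately show "\<exists>m'. reaches prog (13, m) 8 (if Suc l < H - 2 then 13 else 21, m') \<and> ?P (Suc l) m'"
      by blast
  qed (use H m in auto)
  moreover have "H - (H - 2) = 2"
    using H by simp
  ultimately show ?thesis
    by (auto simp: Suc_le_eq)
qed

lemma prog_recover_length:
  assumes "m 0 = 2 + of_nat n / (of_nat n + 1)"
  shows "\<exists>m'. run prog 5 (21, m) = (26, m') \<and> m' 0 = of_nat n \<and> (\<forall>a\<ge>3. m' a = m a)"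
proof -
  have "(of_nat n / (of_nat n + 1)) / (1 - of_nat n / (of_nat n + 1)) = (of_nat n :: rat)"
    by (simp add: field_simps)
  then show ?thesis
    using assms by (simp add: prog_exec)
qed

definition registers_loaded :: "nat list \<Rightarrow> nat \<Rightarrow> nat \<Rightarrow> (nat \<Rightarrow> rat) \<Rightarrow> bool" where
  "registers_loaded w k x m \<longleftrightarrow> m 3 = of_nat (length w) \<and> m 4 = of_nat k \<and> m 5 = of_nat x \<and>
     m 14 = 1 \<and> m 17 = 0 \<and> (\<forall>j<length w. m (33 + j) = of_nat (w ! j))"

lemma prog_load_registers:
  assumes i: "i < length w" and m0: "m 0 = of_nat (length w)"
    and m: "\<forall>a\<ge>3. m a = (if 33 \<le> a \<and> a \<le> 4 * length w + 31
      then stashed_input k w i (a - 30) else stashed_input k w i a)"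
  shows "\<exists>m'. run prog 15 (26, m) = (41, m') \<and> registers_loaded w k (w ! i) m' \<and> m' 6 = 0 \<and> m' 13 = 0"
proof -
  let ?n = "length w"
  have weights: "m (33 + j) = of_nat (w ! j)" if "j < ?n" for j
    using m[rule_format, of "33 + j"] that by (simp add: stashed_input_def input_mem_def)
  have "m (4 * ?n + 30) = of_nat k" "m (31 + 4 * ?n) = of_nat i"
    using m[rule_format, of "4 * ?n + 30"] m[rule_format, of "31 + 4 * ?n"] i
    by (auto simp: stashed_input_def)
  moreover have "addr (4 * of_nat ?n + 30) = 4 * ?n + 30" "addr (4 * of_nat ?n + 30 + 1) = 31 + 4 * ?n"
    "addr (33 + of_nat i) = 33 + i"
    using addr_of_nat[of "4 * ?n + 30"] addr_of_nat[of "31 + 4 * ?n"] addr_of_nat[of "33 + i"]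
    by (simp_all add: add_ac)
  ultimately show ?thesis
    using i by (simp add: prog_exec m0 weights registers_loaded_def)
qed

lemma count_ge_take_Suc:
  "l < length xs \<Longrightarrow> count_ge (take (Suc l) xs) v = count_ge (take l xs) v + (if v \<le> xs ! l then 1 else 0)"
  by (simp add: count_ge_def take_Suc_conv_app_nth)

lemma count_eq_take_Suc:
  "l < length xs \<Longrightarrow> count_eq (take (Suc l) xs) v = count_eq (take l xs) v + (if xs ! l = v then 1 else 0)"
  by (simp add: count_eq_def take_Suc_conv_app_nth)

lemma max_below_take_Suc:
  assumes "l < length xs"
  shows "max_below (take (Suc l) xs) v =
    (if xs ! l < v then max (xs ! l) (max_below (take l xs) v) else max_below (take l xs) v)"
proof -
  have "{u \<in> set (take (Suc l) xs). u < v} =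
      (if xs ! l < v then insert (xs ! l) {u \<in> set (take l xs). u < v} else {u \<in> set (take l xs). u < v})"
    using assms by (auto simp: take_Suc_conv_app_nth)
  moreover have "Max (insert 0 (insert (xs ! l) A)) = max (xs ! l) (Max (insert 0 A))" if "finite A" for A
    using that by (simp add: insert_commute[of 0] Max_insert[of "insert 0 A"])
  ultimately show ?thesis
    by (simp add: max_below_def)
qed

definition count_registers :: "nat list \<Rightarrow> nat \<Rightarrow> nat \<Rightarrow> (nat \<Rightarrow> rat) \<Rightarrow> bool" where
  "count_registers w v l m \<longleftrightarrow> m 7 = of_nat l \<and> m 10 = of_nat (count_ge (take l w) v) \<and>
     m 11 = of_nat (count_eq (take l w) v) \<and> m 12 = of_nat (max_below (take l w) v)"

lemma prog_count_update:
  assumes m: "registers_loaded w k x m" and l: "l < length w" and m8: "m 8 = of_nat v"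
    and counts: "count_registers w v l m"
  shows "\<exists>t m'. t \<le> 8 \<and> run prog t (50, m) = (62, m') \<and> count_registers w v (Suc l) m' \<and>
    (\<forall>r. r \<notin> {7, 9, 10, 11, 12, 15} \<longrightarrow> m' r = m r)"
proof -
  have wl: "m (33 + l) = of_nat (w ! l)" and m14: "m 14 = 1" and m17: "m 17 = 0"
    using m l by (simp_all add: registers_loaded_def)
  have "addr (33 + of_nat l) = 33 + l"
    using addr_of_nat[of "33 + l"] by simp
  note exec = prog_exec m8 wl m14 m17 this l counts[unfolded count_registers_def]
    count_registers_def count_ge_take_Suc count_eq_take_Suc max_below_take_Suc
  show ?thesis
  proof (cases "v \<le> w ! l")
    case True
    then show ?thesis
      by (intro exI[of _ 8]) (cases "w ! l \<le> v"; simp add: exec)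
  next
    case False
    show ?thesis
    proof (cases "w ! l \<le> max_below (take l w) v")
      case True
      with \<open>\<not> v \<le> w ! l\<close> show ?thesis
        by (intro exI[of _ 6]) (simp add: exec max_def)
    next
      case False
      with \<open>\<not> v \<le> w ! l\<close> show ?thesis
        by (intro exI[of _ 8]) (simp add: exec max_def)
    qed
  qed
qed

lemma prog_count_step:
  assumes m: "registers_loaded w k x m" and l: "l < length w" and m8: "m 8 = of_nat v"
    and counts: "count_registers w v l m"
  shows "\<exists>m'. reaches prog (50, m) 10 (if Suc l < length w then 50 else 64, m') \<and>
    count_registers w v (Suc l) m' \<and> (\<forall>r. r \<notin> {7, 9, 10, 11, 12, 15} \<longrightarrow> m' r = m r)"
proof -
  obtain t m' where t: "t \<le> 8" and run: "run prog t (50, m) = (62, m')"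
    and counts': "count_registers w v (Suc l) m'"
    and frame: "\<forall>r. r \<notin> {7, 9, 10, 11, 12, 15} \<longrightarrow> m' r = m r"
    using prog_count_update[OF assms] by blast
  have "m' 3 = of_nat (length w)" "m' 7 = of_nat (Suc l)" "m' 14 = 1"
    using m frame counts' by (simp_all add: registers_loaded_def count_registers_def)
  then have "run prog (if Suc l < length w then 2 else 1) (62, m') = (if Suc l < length w then 50 else 64, m')"
    by (simp add: prog_exec)
  then have "reaches prog (50, m) 10 (if Suc l < length w then 50 else 64, m')"
    using t by (intro reachesI[where t = "t + (if Suc l < length w then 2 else 1)"]) (simp_all add: run_add run)
  then show ?thesis
    using counts' frame by blast
qed

lemma prog_count_loop:
  assumes m: "registers_loaded w k x m" and n: "0 < length w" and m8: "m 8 = of_nat v"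
    and init: "m 7 = 0" "m 10 = 0" "m 11 = 0" "m 12 = 0"
  shows "\<exists>m'. reaches prog (50, m) (length w * 10) (64, m') \<and>
    m' 10 = of_nat (count_ge w v) \<and> m' 11 = of_nat (count_eq w v) \<and> m' 12 = of_nat (max_below w v) \<and>
    (\<forall>r. r \<notin> {7, 9, 10, 11, 12, 15} \<longrightarrow> m' r = m r)"
proof -
  let ?P = "\<lambda>l m'. count_registers w v l m' \<and>
    (\<forall>r. r \<notin> {7, 9, 10, 11, 12, 15} \<longrightarrow> m' r = m r)"
  have "\<exists>m'. reaches prog (50, m) (length w * 10) (64, m') \<and> ?P (length w) m'"
  proof (rule reaches_loop)
    fix l m1 assume "l < length w" and P: "?P l m1"
    moreover from P have "registers_loaded w k x m1" "m1 8 = of_nat v"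
      using m m8 by (simp_all add: registers_loaded_def)
    ultimately show "\<exists>m'. reaches prog (50, m1) 10 (if Suc l < length w then 50 else 64, m') \<and> ?P (Suc l) m'"
      using prog_count_step[of w k x m1 l v] by auto
  qed (use n init in \<open>simp_all add: count_registers_def count_ge_def count_eq_def max_below_def\<close>)
  then show ?thesis
    by (auto simp: count_registers_def)
qed

lemma prog_compute_term:
  assumes "m 4 = of_nat k" "m 8 = of_nat v" "m 17 = 0" and "v \<le> x"
    and "m 10 = of_nat (count_ge w v)" "m 11 = of_nat (count_eq w v)" "m 12 = of_nat (max_below w v)"
  shows "\<exists>t m'. t \<le> 8 \<and> run prog t (64, m) = (72, m') \<and> m' 13 = m 13 + shapley_term k w x v \<and>
    (\<forall>r. r \<notin> {13, 15, 16} \<longrightarrow> m' r = m r)"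
proof (cases "k \<le> count_ge w v")
  case True
  then show ?thesis
    using assms by (intro exI[of _ 7]) (simp add: prog_exec shapley_term_def min_def)
next
  case False
  then show ?thesis
    using assms by (intro exI[of _ 8]) (simp add: prog_exec shapley_term_def min_def)
qed

lemma prog_add_term:
  assumes m: "registers_loaded w k x m" and j: "j < length w" and m6: "m 6 = of_nat j"
  shows "\<exists>m'. reaches prog (41, m) (10 * length w + 20) (72, m') \<and>
    m' 13 = m 13 + shapley_term k w x (w ! j) \<and>
    (\<forall>r. r \<notin> {7, 8, 9, 10, 11, 12, 13, 15, 16} \<longrightarrow> m' r = m r)"
proof -
  have wj: "m (33 + j) = of_nat (w ! j)" and m4: "m 4 = of_nat k" and m5: "m 5 = of_nat x"
    and m17: "m 17 = 0"
    using m j by (simp_all add: registers_loaded_def)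
  have "addr (33 + of_nat j) = 33 + j"
    using addr_of_nat[of "33 + j"] by simp
  note exec = prog_exec m6 wj m4 m5 this
  show ?thesis
  proof (cases "w ! j \<le> x")
    case False
    then have "run prog 5 (41, m) = (72, m(15 := 33 + m 6, 8 := of_nat (w ! j)))"
      by (simp add: exec)
    with False show ?thesis
      by (intro exI[of _ "m(15 := 33 + m 6, 8 := of_nat (w ! j))"]) (simp add: reachesI shapley_term_def)
  next
    case True
    define v where "v = w ! j"
    define ma where "ma = m(15 := 33 + m 6, 8 := of_nat v, 10 := 0, 11 := 0, 12 := 0, 7 := 0)"
    have "run prog 8 (41, m) = (50, ma)"
      using True by (simp add: exec ma_def v_def)
    then have reach1: "reaches prog (41, m) 8 (50, ma)"
      by (rule reachesI) simp
    have "registers_loaded w k x ma" "0 < length w" "ma 8 = of_nat v"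
      "ma 7 = 0" "ma 10 = 0" "ma 11 = 0" "ma 12 = 0"
      using m j by (auto simp: ma_def registers_loaded_def)
    then obtain m' where reach2: "reaches prog (50, ma) (length w * 10) (64, m')"
      and counts: "m' 10 = of_nat (count_ge w v)" "m' 11 = of_nat (count_eq w v)"
        "m' 12 = of_nat (max_below w v)"
      and frame: "\<forall>r. r \<notin> {7, 9, 10, 11, 12, 15} \<longrightarrow> m' r = ma r"
      by (blast dest: prog_count_loop)
    moreover have "m' 4 = of_nat k" "m' 8 = of_nat v" "m' 17 = 0"
      using frame m4 m17 by (simp_all add: ma_def)
    ultimately obtain t m'' where "t \<le> 8" "run prog t (64, m') = (72, m'')"
      and m'': "m'' 13 = m' 13 + shapley_term k w x v" "\<forall>r. r \<notin> {13, 15, 16} \<longrightarrow> m'' r = m' r"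
      using prog_compute_term[of m' k v x w] True v_def by blast
    then have "reaches prog (41, m) (8 + length w * 10 + 8) (72, m'')"
      using reaches_trans[OF reaches_trans[OF reach1 reach2]] reachesI by blast
    then have "reaches prog (41, m) (10 * length w + 20) (72, m'')"
      by (rule reaches_mono) simp
    moreover have "m' 13 = m 13"
      using frame by (simp add: ma_def)
    ultimately show ?thesis
      using m'' frame by (auto simp: ma_def v_def)
  qed
qed

lemma prog_sum_loop:
  assumes m: "registers_loaded w k x m" and n: "0 < length w" and init: "m 6 = 0" "m 13 = 0"
  shows "\<exists>m'. reaches prog (41, m) (length w * (10 * length w + 23)) (75, m') \<and>
    registers_loaded w k x m' \<and> m' 13 = (\<Sum>j<length w. shapley_term k w x (w ! j))"
proof -
  let ?P = "\<lambda>j m'. registers_loaded w k x m' \<and> m' 6 = of_nat j \<and>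
    m' 13 = (\<Sum>j'<j. shapley_term k w x (w ! j'))"
  have "\<exists>m'. reaches prog (41, m) (length w * (10 * length w + 23)) (75, m') \<and> ?P (length w) m'"
  proof (rule reaches_loop)
    fix j m1 assume j: "j < length w" and P: "?P j m1"
    then obtain m2 where reach: "reaches prog (41, m1) (10 * length w + 20) (72, m2)"
      and m2: "m2 13 = m1 13 + shapley_term k w x (w ! j)"
        "\<forall>r. r \<notin> {7, 8, 9, 10, 11, 12, 13, 15, 16} \<longrightarrow> m2 r = m1 r"
      using prog_add_term by blast
    have loaded: "registers_loaded w k x m2"
      using P m2(2) by (simp add: registers_loaded_def)
    define m3 where "m3 = m2(6 := of_nat (Suc j))"
    have "run prog (if Suc j < length w then 3 else 2) (72, m2) = (if Suc j < length w then 41 else 75, m3)"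
      using loaded P m2(2) by (simp add: prog_exec registers_loaded_def m3_def add.commute)
    then have "reaches prog (72, m2) 3 (if Suc j < length w then 41 else 75, m3)"
      by (rule reachesI) simp
    with reach have "reaches prog (41, m1) (10 * length w + 20 + 3) (if Suc j < length w then 41 else 75, m3)"
      by (rule reaches_trans)
    then have "reaches prog (41, m1) (10 * length w + 23) (if Suc j < length w then 41 else 75, m3)"
      by (simp add: add.assoc)
    moreover have "?P (Suc j) m3"
      using loaded P m2(1) by (simp add: m3_def registers_loaded_def)
    ultimately show "\<exists>m'. reaches prog (41, m1) (10 * length w + 23)
        (if Suc j < length w then 41 else 75, m') \<and> ?P (Suc j) m'"
      by blast
  qed (use m n init in simp_all)
  then show ?thesis
    by auto
qed

definition prog_time :: "nat \<Rightarrow> nat" where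
  "prog_time n = 13 + (4 * n - 1) * 8 + 5 + 15 + n * (10 * n + 23) + 1"

lemma prog_computes_shapley_terms:
  assumes i: "i < length w"
  shows "\<exists>m'. reaches prog (0, input_mem k w i) (prog_time (length w)) (76, m') \<and>
    m' 0 = (\<Sum>j<length w. shapley_term k w (w ! i) (w ! j))"
proof -
  let ?n = "length w"
  define f :: rat where "f = of_nat ?n / (of_nat ?n + 1)"
  have n: "0 < ?n" using i by linarith
  have f: "0 \<le> f" "f < 1" unfolding f_def by simp_all
  obtain m1 where run1: "run prog 13 (0, input_mem k w i) = (13, m1)"
    and m1: "m1 0 = of_nat (4 * ?n + 1) + f" "\<forall>a\<ge>3. m1 a = stashed_input k w i a"
    using prog_stash_inputs[OF n, of k i] unfolding f_def by blast
  obtain m2 where reach2: "reaches prog (13, m1) ((4 * ?n + 1 - 2) * 8) (21, m2)" and m2: "m2 0 = 2 + f"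
    "\<forall>a\<ge>3. m2 a = (if 33 \<le> a \<and> a \<le> 4 * ?n + 1 + 30 then stashed_input k w i (a - 30) else stashed_input k w i a)"
    using prog_copy_inputs[OF f _ m1] n by auto
  obtain m3 where run3: "run prog 5 (21, m2) = (26, m3)" and m3: "m3 0 = of_nat ?n" "\<forall>a\<ge>3. m3 a = m2 a"
    using prog_recover_length[of m2 ?n] m2(1) unfolding f_def by blast
  obtain m4 where run4: "run prog 15 (26, m3) = (41, m4)" and m4: "registers_loaded w k (w ! i) m4"
    "m4 6 = 0" "m4 13 = 0"
    using prog_load_registers[where k = k and m = m3, OF i m3(1)] m2(2) m3(2) by fastforce
  obtain m5 where reach5: "reaches prog (41, m4) (?n * (10 * ?n + 23)) (75, m5)"
    and m5: "registers_loaded w k (w ! i) m5" "m5 13 = (\<Sum>j<?n. shapley_term k w (w ! i) (w ! j))"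
    using prog_sum_loop[OF m4(1) n m4(2,3)] by blast
  have run6: "run prog 1 (75, m5) = (76, m5(0 := m5 13 + m5 17))"
    by (simp add: prog_exec)
  have "4 * ?n + 1 - 2 = 4 * ?n - 1"
    by simp
  then have "reaches prog (0, input_mem k w i) (prog_time ?n) (76, m5(0 := m5 13 + m5 17))"
    using reaches_trans[OF reaches_trans[OF reaches_trans[OF reaches_trans[OF reaches_trans[OF
        reachesI[OF run1 order_refl] reach2] reachesI[OF run3 order_refl]] reachesI[OF run4 order_refl]]
        reach5] reachesI[OF run6 order_refl]]
    by (simp add: prog_time_def)
  then show ?thesis
    using m5 by (auto simp: registers_loaded_def)
qed

lemma prog_time_le_cube:
  assumes "1 \<le> n"
  shows "prog_time n \<le> 100 * n ^ 3"
proof -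
  have "1 \<le> n ^ 3" "n \<le> n ^ 3" "n * n \<le> n ^ 3"
    using assms by (simp_all add: power3_eq_cube)
  then show ?thesis
    by (simp add: prog_time_def algebra_simps)
qed

theorem corollary4:
  "\<exists>(p :: instr list) (C :: nat). \<forall>(k :: nat) (w :: nat list) (i :: nat).
     i < length w \<longrightarrow>
     computes_within p k w i
       (shapley {0..<length w} (kmax_game k w) i) (C * length w ^ 3)"
proof (intro exI allI impI)
  fix k :: nat and w :: "nat list" and i :: nat
  assume i: "i < length w"
  obtain m where "reaches prog (0, input_mem k w i) (prog_time (length w)) (76, m)"
    and result: "m 0 = shapley {0..<length w} (kmax_game k w) i"
    using prog_computes_shapley_terms[OF i, of k] shapley_kmax_game_eq_sum_terms[OF i, of k] by auto
  moreover have "1 \<le> length w"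
    using i by linarith
  ultimately have "reaches prog (0, input_mem k w i) (100 * length w ^ 3) (76, m)"
    by (blast intro: reaches_mono prog_time_le_cube)
  then show "computes_within prog k w i (shapley {0..<length w} (kmax_game k w) i) (100 * length w ^ 3)"
    unfolding computes_within_def reaches_def using prog_halts result by auto
qed

end
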